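(* Let $\epsilon<2$ be a constant. For any instance oracle $f$ with $\max\{|f(G,v)|: G \text{ an } n\text{-node graph}, v\in G\}=o(n\log n)$ and any deterministic exploration algorithm $A$, there exist a constant $c>0$ and infinitely many $n$ such that for each of them some $n$-node graph $G$ and starting node $v$ force the agent executing $A$ with input $f(G,v)$ from $v$ to make at least $c n^{\epsilon}$ edge traversals before completing exploration; i.e., exploration takes time $\Omega(n^\epsilon)$ on some $n$-node graph, for arbitrarily large $n$.
   Context: Model: a graph is a simple connected undirected graph with $n$ nodes. Nodes are unlabeled; at each node of degree $d$ the incident edges carry distinct port numbers $0,\dots,d-1$, arbitrarily assigned. A mobile agent starts at some node. At each step, located at a node $u$ whose degree it knows, it chooses a port at $u$ and traverses the corresponding edge to a neighbor $w$; upon arrival it learns the port number of this edge at $w$ and the degree of $w$. The agent must visit all nodes and stop; the time of exploration is the number of edge traversals. A deterministic exploration algorithm receives as input a binary string (advice); its size is its length. An instance oracle is a function assigning a binary string $f(G,v)$ to each pair $(G,v)$ where $G$ is a port-numbered graph and $v$ is the starting node of the agent. Logarithms are to base 2. *)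

theory Defs
  imports Complex_Main "HOL-Library.Landau_Symbols"
begin

text \<open>A port-numbered graph with nodes 0..<nodes G (the labels are invisible to the agent).
  deg G u is the degree of u; port G u p = (w, q) means that the edge with port p at u
  leads to w and has port q at w.\<close>
record pgraph =
  nodes :: nat
  deg :: "nat \<Rightarrow> nat"
  port :: "nat \<Rightarrow> nat \<Rightarrow> nat \<times> nat"

definition adj :: "pgraph \<Rightarrow> nat \<Rightarrow> nat \<Rightarrow> bool" where
  "adj G u w \<longleftrightarrow> u < nodes G \<and> (\<exists>p < deg G u. fst (port G u p) = w)"

text \<open>Valid port-numbered simple connected graph (with a canonical normal form outside the
  relevant domain, so that the representation is determined by the graph itself).\<close>
definition valid_pgraph :: "pgraph \<Rightarrow> bool" where
  "valid_pgraph G \<longleftrightarrow>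
     (\<forall>u. nodes G \<le> u \<longrightarrow> deg G u = 0) \<and>
     (\<forall>u p. \<not> (u < nodes G \<and> p < deg G u) \<longrightarrow> port G u p = (0, 0)) \<and>
     (\<forall>u < nodes G. \<forall>p < deg G u.
        fst (port G u p) < nodes G \<and>
        snd (port G u p) < deg G (fst (port G u p)) \<and>
        port G (fst (port G u p)) (snd (port G u p)) = (u, p) \<and>
        fst (port G u p) \<noteq> u) \<and>
     (\<forall>u < nodes G. inj_on (\<lambda>p. fst (port G u p)) {..<deg G u}) \<and>
     (\<forall>u < nodes G. \<forall>w < nodes G. (adj G)\<^sup>*\<^sup>* u w)"

text \<open>A deterministic exploration algorithm: given the advice, the degree of the start node and
  the history of observations (for each traversal so far: the port by which the agent entered
  the new node and that node's degree), it either stops (None) or takes a port (Some p).\<close>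
type_synonym algo = "bool list \<Rightarrow> nat \<Rightarrow> (nat \<times> nat) list \<Rightarrow> nat option"

type_synonym advice_fn = "pgraph \<Rightarrow> nat \<Rightarrow> bool list"

fun run :: "pgraph \<Rightarrow> algo \<Rightarrow> bool list \<Rightarrow> nat \<Rightarrow> nat \<Rightarrow> nat \<times> (nat \<times> nat) list" where
  "run G A s v 0 = (v, [])"
| "run G A s v (Suc k) =
     (let (u, h) = run G A s v k in
      case A s (deg G v) h of
        None \<Rightarrow> (u, h)
      | Some p \<Rightarrow> (let (w, q) = port G u p in (w, h @ [(q, deg G w)])))"

definition explores_in :: "pgraph \<Rightarrow> algo \<Rightarrow> bool list \<Rightarrow> nat \<Rightarrow> nat \<Rightarrow> bool" where
  "explores_in G A s v t \<longleftrightarrow>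
     (\<forall>k < t. \<exists>p. A s (deg G v) (snd (run G A s v k)) = Some p
                    \<and> p < deg G (fst (run G A s v k))) \<and>
     A s (deg G v) (snd (run G A s v t)) = None \<and>
     {..<nodes G} \<subseteq> {fst (run G A s v k) | k. k \<le> t}"

definition max_advice :: "advice_fn \<Rightarrow> nat \<Rightarrow> nat" where
  "max_advice f n = Max {length (f G v) | G v. valid_pgraph G \<and> nodes G = n \<and> v < n}"

end

theory Submission
  imports Defs "HOL-Library.FuncSet" "HOL-Number_Theory.Cong" "HOL-Library.Infinite_Set"
begin

text \<open>Subdivide, for each node \<open>a\<close> of a clique on \<open>2r+1\<close> nodes, one of the edges
  \<open>{a, a + h(a)}\<close> with \<open>1 \<le> h(a) \<le> r\<close> by a new node. This gives \<open>r^(2r+1)\<close> graphs with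
  \<open>n = 4r+2\<close> nodes. From the advice, the exploration time and the set of times at which the agent
  first enters the subdivision nodes one can replay the run and read off \<open>h\<close>. So if all these
  graphs are explored within time \<open>T\<close> using advice of length \<open>L\<close>, then
  \<open>r^(2r+1) \<le> 2^(L+1) T (T choose 2r+1) \<le> 2^(L+1) T^(2r+2) / (2r+1)!\<close>. With \<open>L = o(n log n)\<close> and
  \<open>T \<approx> n^\<epsilon>\<close> this fails for large \<open>r\<close> whenever \<open>\<epsilon> < 2\<close>: the two sides of
  \<open>r^(2r+1) (2r+1)! \<le> 2^(L+1) T^(2r+2)\<close> are \<open>r^(4r + o(r))\<close> and \<open>r^(2\<epsilon>r + o(r))\<close>.\<close>

section \<open>Runs of an exploration algorithm\<close>

lemma run_Suc_Some:
  assumes "run G A s v k = (u, H)" "A s (deg G v) H = Some p" "port G u p = (w, q)"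
  shows "run G A s v (Suc k) = (w, H @ [(q, deg G w)])"
  using assms by simp

lemma explores_in_step:
  assumes "explores_in G A s v t" "k < t"
  obtains p where "A s (deg G v) (snd (run G A s v k)) = Some p" "p < deg G (fst (run G A s v k))"
  using assms unfolding explores_in_def by blast

lemma explores_in_visits:
  assumes "explores_in G A s v t" "w < nodes G" "w \<noteq> v"
  shows "\<exists>k<t. fst (run G A s v (Suc k)) = w"
proof -
  obtain k where k: "k \<le> t" "fst (run G A s v k) = w"
    using assms(1,2) unfolding explores_in_def by blast
  moreover have "k \<noteq> 0" using k(2) assms(3) by (cases k) auto
  ultimately show ?thesis by (metis Suc_le_lessD not0_implies_Suc)
qed

definition first_visit :: "pgraph \<Rightarrow> algo \<Rightarrow> bool list \<Rightarrow> nat \<Rightarrow> nat \<Rightarrow> nat" where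
  "first_visit G A s v w = (LEAST k. fst (run G A s v (Suc k)) = w)"

lemma first_visit:
  assumes "explores_in G A s v t" "w < nodes G" "w \<noteq> v"
  shows first_visit_less: "first_visit G A s v w < t"
    and run_first_visit: "fst (run G A s v (Suc (first_visit G A s v w))) = w"
proof -
  obtain k where "k < t" "fst (run G A s v (Suc k)) = w" using explores_in_visits[OF assms] by blast
  then show "first_visit G A s v w < t" "fst (run G A s v (Suc (first_visit G A s v w))) = w"
    unfolding first_visit_def by (auto intro: LeastI Least_le le_less_trans)
qed

lemma first_visit_eqI:
  assumes "fst (run G A s v (Suc k)) = w" "\<forall>j\<le>k. fst (run G A s v j) \<noteq> w"
  shows "first_visit G A s v w = k"
  unfolding first_visit_def
proof (rule Least_equality)
  fix j assume "fst (run G A s v (Suc j)) = w"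
  then show "k \<le> j" using assms(2) by (metis not_less_eq_eq)
qed (fact assms(1))

lemma deg_le_nodes:
  assumes "valid_pgraph G" "u < nodes G"
  shows "deg G u \<le> nodes G"
proof -
  have "inj_on (\<lambda>p. fst (port G u p)) {..<deg G u}" "(\<lambda>p. fst (port G u p)) ` {..<deg G u} \<subseteq> {..<nodes G}"
    using assms unfolding valid_pgraph_def by auto
  then show ?thesis using card_inj_on_le[of _ "{..<deg G u}" "{..<nodes G}"] by fastforce
qed

lemma finite_valid_pgraphs: "finite {G. valid_pgraph G \<and> nodes G = n}"
proof -
  define D where "D = {d::nat\<Rightarrow>nat. \<forall>x. (x \<in> {..<n} \<longrightarrow> d x \<in> {..n}) \<and> (x \<notin> {..<n} \<longrightarrow> d x = 0)}"
  define P1 where "P1 = {q::nat\<Rightarrow>nat\<times>nat. \<forall>y. (y \<in> {..<n} \<longrightarrow> q y \<in> {..<n} \<times> {..n}) \<and> (y \<notin> {..<n} \<longrightarrow> q y = (0,0))}"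
  define P where "P = {p::nat\<Rightarrow>nat\<Rightarrow>nat\<times>nat. \<forall>x. (x \<in> {..<n} \<longrightarrow> p x \<in> P1) \<and> (x \<notin> {..<n} \<longrightarrow> p x = (\<lambda>_. (0,0)))}"
  have fD: "finite D" unfolding D_def by (rule finite_set_of_finite_funs) auto
  have fP1: "finite P1" unfolding P1_def by (rule finite_set_of_finite_funs) auto
  have fP: "finite P" unfolding P_def by (rule finite_set_of_finite_funs) (auto simp: fP1)
  have "{G. valid_pgraph G \<and> nodes G = n} \<subseteq> (\<lambda>(d,p). \<lparr>nodes = n, deg = d, port = p\<rparr>) ` (D \<times> P)"
  proof
    fix G assume G: "G \<in> {G. valid_pgraph G \<and> nodes G = n}"
    then have v: "valid_pgraph G" and nG: "nodes G = n" by auto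
    have dl: "deg G u \<le> n" if "u < n" for u using deg_le_nodes[OF v] that nG by simp
    have d: "deg G \<in> D" unfolding D_def using v dl nG unfolding valid_pgraph_def by auto
    have pv: "port G u p \<in> {..<n} \<times> {..n}" if "u < n" "p < n" for u p
    proof (cases "p < deg G u")
      case True
      then have "fst (port G u p) < n" "snd (port G u p) < deg G (fst (port G u p))"
        using v that nG unfolding valid_pgraph_def by auto
      then show ?thesis using dl[of "fst (port G u p)"] by (cases "port G u p") auto
    next
      case False
      then have "port G u p = (0,0)" using v unfolding valid_pgraph_def by blast
      then show ?thesis using that by simp
    qed
    have p0: "port G u p = (0,0)" if "\<not> (u < n \<and> p < n)" for u p
    proof -
      have "\<not> (u < nodes G \<and> p < deg G u)" using that dl nG by (metis order.strict_trans2)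
      then show ?thesis using v unfolding valid_pgraph_def by blast
    qed
    have p: "port G \<in> P" unfolding P_def P1_def using pv p0 by auto
    have "G = \<lparr>nodes = n, deg = deg G, port = port G\<rparr>" using nG by (cases G) simp
    then show "G \<in> (\<lambda>(d,p). \<lparr>nodes = n, deg = d, port = p\<rparr>) ` (D \<times> P)" using d p by force
  qed
  moreover have "finite ((\<lambda>(d,p). \<lparr>nodes = n, deg = d, port = p\<rparr>) ` (D \<times> P))" using fD fP by simp
  ultimately show ?thesis by (rule finite_subset)
qed

lemma length_advice_le_max_advice:
  assumes "valid_pgraph G" "nodes G = n" "v < n"
  shows "length (f G v) \<le> max_advice f n"
proof -
  have eq: "{length (f G v) | G v. valid_pgraph G \<and> nodes G = n \<and> v < n} =
     (\<lambda>(G,v). length (f G v)) ` ({G. valid_pgraph G \<and> nodes G = n} \<times> {..<n})" by auto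
  have "finite {length (f G v) | G v. valid_pgraph G \<and> nodes G = n \<and> v < n}"
    unfolding eq using finite_valid_pgraphs by simp
  then show ?thesis unfolding max_advice_def by (rule Max_ge) (use assms in blast)
qed

section \<open>Subdivided cliques\<close>

lemma mod_add_left_inj:
  fixes u g g' m :: nat
  assumes "(u + g) mod m = (u + g') mod m" "g < m" "g' < m"
  shows "g = g'"
proof -
  have "[u + g = u + g'] (mod m)" using assms(1) by (simp add: cong_def)
  then show ?thesis using assms(2,3) by (simp add: cong_add_lcancel_nat cong_less_modulus_unique_nat)
qed

lemma mod_add_neq_self:
  fixes u g m :: nat
  assumes "u < m" "0 < g" "g < m"
  shows "(u + g) mod m \<noteq> u"
  using mod_add_left_inj[of u g m 0] assms by auto

lemma mod_add_mod_add_complement: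
  fixes u g m :: nat
  assumes "u < m" "g < m"
  shows "((u + g) mod m + (m - g)) mod m = u"
proof -
  have "((u + g) mod m + (m - g)) mod m = (u + g + (m - g)) mod m" by (simp add: mod_add_left_eq)
  also have "u + g + (m - g) = u + m" using assms by simp
  finally show ?thesis using assms by simp
qed

definition sc_deg :: "nat \<Rightarrow> nat \<Rightarrow> nat" where
  "sc_deg r u = (if u < 2*r+1 then 2*r else if u < 4*r+2 then 2 else 0)"

text \<open>The subdivided clique: nodes \<open>0..2r\<close> form a clique in which port \<open>p\<close> at \<open>u\<close> leads to
  \<open>(u + p + 1) mod (2r+1)\<close>; for each clique node \<open>a\<close> the edge \<open>{a, (a + h a) mod (2r+1)}\<close>
  (port \<open>h a - 1\<close> at \<open>a\<close>) is subdivided by the node \<open>2r+1+a\<close>, whose port 0 leads back to \<open>a\<close>.\<close>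

definition sc_port :: "nat \<Rightarrow> (nat \<Rightarrow> nat) \<Rightarrow> nat \<Rightarrow> nat \<Rightarrow> nat \<times> nat" where
  "sc_port r h u p =
   (if u < 2*r+1 \<and> p < 2*r then
     (if Suc p \<le> r then (if h u = Suc p then (2*r+1+u, 0) else ((u + Suc p) mod (2*r+1), 2*r - 1 - p))
      else (if h ((u + Suc p) mod (2*r+1)) = 2*r+1 - Suc p then (2*r+1 + (u + Suc p) mod (2*r+1), 1)
            else ((u + Suc p) mod (2*r+1), 2*r - 1 - p)))
    else if 2*r+1 \<le> u \<and> u < 4*r+2 \<and> p < 2 then
     (if p = 0 then (u - (2*r+1), h (u-(2*r+1)) - 1)
      else ((u - (2*r+1) + h (u-(2*r+1))) mod (2*r+1), 2*r - h (u-(2*r+1))))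
    else (0,0))"

lemma sc_port_clique:
  assumes "u < 2*r+1" "p < 2*r" "b = (u + Suc p) mod (2*r+1)"
  shows "sc_port r h u p =
    (if Suc p \<le> r then (if h u = Suc p then (2*r+1+u, 0) else (b, 2*r-1-p))
     else (if h b = 2*r+1 - Suc p then (2*r+1+b, 1) else (b, 2*r-1-p)))"
  using assms unfolding sc_port_def by simp

lemma sc_port_subdivision:
  assumes "a < 2*r+1"
  shows "sc_port r h (2*r+1+a) p =
    (if p = 0 then (a, h a - 1) else if p = 1 then ((a + h a) mod (2*r+1), 2*r - h a) else (0, 0))"
  using assms unfolding sc_port_def by simp

lemma sc_port_outside: "\<not> (u < 4*r+2 \<and> p < sc_deg r u) \<Longrightarrow> sc_port r h u p = (0, 0)"
  by (auto simp: sc_port_def sc_deg_def)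

lemma sc_port_cases:
  obtains (clique) "u < 2*r+1" "p < 2*r"
  | (subdivision) a where "a < 2*r+1" "u = 2*r+1+a" "p < 2"
  | (outside) "\<not> (u < 4*r+2 \<and> p < sc_deg r u)"
proof (cases "u < 4*r+2 \<and> p < sc_deg r u")
  case True
  then show ?thesis
    using that(1) that(2)[of "u - (2*r+1)"] by (cases "u < 2*r+1") (auto simp: sc_deg_def)
qed (use that(3) in blast)

lemma sc_port_from_subdivision:
  assumes "2*r+1 \<le> u"
  shows "fst (sc_port r h u p) < 2*r+1"
proof (cases rule: sc_port_cases[where u=u and r=r and p=p])
  case (subdivision a)
  then show ?thesis using sc_port_subdivision[OF subdivision(1), of h p] by (cases "p = 0") auto
qed (use assms sc_port_outside in auto)

lemma sc_port_subdivision_target: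
  assumes "fst (sc_port r h u p) = 2*r+1+a"
  shows "u < 2*r+1 \<and> a < 2*r+1 \<and> h a = (if Suc p \<le> r then Suc p else 2*r+1 - Suc p)"
proof -
  have u: "u < 2*r+1" using sc_port_from_subdivision[of r u h p] assms by (cases "2*r+1 \<le> u") auto
  have p: "p < 2*r"
  proof (rule ccontr)
    assume "\<not> p < 2*r"
    then have "sc_port r h u p = (0, 0)" using u by (intro sc_port_outside) (simp add: sc_deg_def)
    then show False using assms by simp
  qed
  define b where "b = (u + Suc p) mod (2*r+1)"
  have "b < 2*r+1" by (simp add: b_def)
  then show ?thesis using assms sc_port_clique[OF u p b_def, of h] u by (auto split: if_splits)
qed

lemma sc_port_eqI:
  assumes "\<And>a. a < 2*r+1 \<Longrightarrow> 2*r+1+a \<in> {u, fst (sc_port r h1 u p), fst (sc_port r h2 u p)} \<Longrightarrow>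
      h1 a = h2 a \<or> (2*r+1 \<le> fst (sc_port r h1 u p) \<and> 2*r+1 \<le> fst (sc_port r h2 u p))"
  shows "sc_port r h1 u p = sc_port r h2 u p"
proof (cases rule: sc_port_cases[where u=u and r=r and p=p])
  case clique
  define b where "b = (u + Suc p) mod (2*r+1)"
  have "b < 2*r+1" by (simp add: b_def)
  then show ?thesis using assms[of u] assms[of b] clique
    sc_port_clique[OF clique b_def, of h1] sc_port_clique[OF clique b_def, of h2] by (auto split: if_splits)
next
  case (subdivision a)
  then have "h1 a = h2 a" using assms[of a] sc_port_from_subdivision[of r u h1 p] by auto
  then show ?thesis using sc_port_subdivision[OF subdivision(1)] subdivision(2) by simp
next
  case outside
  then show ?thesis by (simp add: sc_port_outside)
qed

definition sc_graph :: "nat \<Rightarrow> (nat \<Rightarrow> nat) \<Rightarrow> pgraph" where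
  "sc_graph r h = \<lparr>nodes = 4*r+2, deg = sc_deg r, port = sc_port r h\<rparr>"

lemma sc_graph_simps [simp]:
  "nodes (sc_graph r h) = 4*r+2" "deg (sc_graph r h) = sc_deg r" "port (sc_graph r h) = sc_port r h"
  by (simp_all add: sc_graph_def)

definition sc_choices :: "nat \<Rightarrow> (nat \<Rightarrow> nat) set" where
  "sc_choices r = (\<Pi>\<^sub>E a\<in>{..<2*r+1}. {1..r})"

lemma sc_choicesD: "h \<in> sc_choices r \<Longrightarrow> a < 2*r+1 \<Longrightarrow> 1 \<le> h a \<and> h a \<le> r"
  unfolding sc_choices_def by (simp add: PiE_iff)

lemma sc_port_valid_clique:
  assumes h: "h \<in> sc_choices r" and u: "u < 2*r+1" and p: "p < 2*r"
  defines "w \<equiv> fst (sc_port r h u p)" and "q \<equiv> snd (sc_port r h u p)"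
  shows "sc_port r h w q = (u, p) \<and> q < sc_deg r w \<and> w < 4*r+2 \<and> w \<noteq> u"
proof -
  define b where "b = (u + Suc p) mod (2*r+1)"
  define pb where "pb = 2*r-1-p"
  have b: "b < 2*r+1" "b \<noteq> u" using mod_add_neq_self[OF u, of "Suc p"] p by (auto simp: b_def)
  have pb: "pb < 2*r" "Suc pb \<le> r \<longleftrightarrow> \<not> Suc p \<le> r" "2*r+1 - Suc p = Suc pb"
    "2*r+1 - Suc pb = Suc p" "2*r - Suc pb = p" "2*r-1-pb = p"
    using p by (auto simp: pb_def)
  have rev_jump: "(b + Suc pb) mod (2*r+1) = u"
    using mod_add_mod_add_complement[OF u, of "Suc p"] p unfolding b_def[symmetric] pb(3) by simp
  note fwd = sc_port_clique[OF u p b_def, of h]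
    and bwd = sc_port_clique[OF b(1) pb(1) rev_jump[symmetric], of h]
  consider (via_u) "Suc p \<le> r" "h u = Suc p" | (via_b) "\<not> Suc p \<le> r" "h b = Suc pb"
    | (direct) "Suc p \<le> r \<longrightarrow> h u \<noteq> Suc p" "\<not> Suc p \<le> r \<longrightarrow> h b \<noteq> Suc pb"
    by blast
  then show ?thesis
  proof cases
    case via_u
    then have "sc_port r h u p = (2*r+1+u, 0)" using fwd by simp
    moreover have "sc_port r h (2*r+1+u) 0 = (u, p)" using sc_port_subdivision[OF u] via_u by simp
    ultimately show ?thesis using u by (simp add: sc_deg_def w_def q_def)
  next
    case via_b
    then have "sc_port r h u p = (2*r+1+b, 1)" using fwd pb by simp
    moreover have "sc_port r h (2*r+1+b) 1 = (u, p)"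
      using sc_port_subdivision[OF b(1)] via_b rev_jump pb by simp
    ultimately show ?thesis using b u by (simp add: sc_deg_def w_def q_def)
  next
    case direct
    then have "sc_port r h u p = (b, pb)" using fwd pb by (auto simp: pb_def)
    moreover have "sc_port r h b pb = (u, p)" using bwd direct pb by auto
    ultimately show ?thesis using b pb by (simp add: sc_deg_def w_def q_def)
  qed
qed

lemma sc_port_valid_subdivision:
  assumes h: "h \<in> sc_choices r" and a: "a < 2*r+1" and p: "p < 2"
  defines "u \<equiv> 2*r+1+a"
  defines "w \<equiv> fst (sc_port r h u p)" and "q \<equiv> snd (sc_port r h u p)"
  shows "sc_port r h w q = (u, p) \<and> q < sc_deg r w \<and> w < 4*r+2 \<and> w \<noteq> u"
proof (cases "p = 0")
  case True
  have ha: "1 \<le> h a" "h a \<le> r" using sc_choicesD[OF h a] by auto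
  then have "sc_port r h a (h a - 1) = (u, 0)"
    using sc_port_clique[OF a, of "h a - 1" "(a + h a) mod (2*r+1)" h] by (simp add: u_def)
  then show ?thesis using sc_port_subdivision[OF a, of h] True a ha by (simp add: u_def w_def q_def sc_deg_def)
next
  case False
  define c where "c = (a + h a) mod (2*r+1)"
  define pc where "pc = 2*r - h a"
  have ha: "1 \<le> h a" "h a \<le> r" using sc_choicesD[OF h a] by auto
  have c: "c < 2*r+1" by (simp add: c_def)
  have pc: "pc < 2*r" "\<not> Suc pc \<le> r" "2*r+1 - Suc pc = h a" "2*r+1 - h a = Suc pc"
    using ha by (auto simp: pc_def)
  have rev_jump: "(c + Suc pc) mod (2*r+1) = a"
    using mod_add_mod_add_complement[OF a, of "h a"] ha unfolding c_def[symmetric] pc(4) by simp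
  have p1: "p = 1" using p False by simp
  have "sc_port r h u p = (c, pc)" using sc_port_subdivision[OF a, of h] p1 by (simp add: u_def c_def pc_def)
  moreover have "sc_port r h c pc = (u, p)"
    using sc_port_clique[OF c pc(1) rev_jump[symmetric], of h] pc p1 by (simp add: u_def)
  ultimately show ?thesis using c pc by (simp add: sc_deg_def w_def q_def u_def)
qed

lemma sc_port_valid:
  assumes h: "h \<in> sc_choices r" and u: "u < 4*r+2" and p: "p < sc_deg r u"
  defines "w \<equiv> fst (sc_port r h u p)" and "q \<equiv> snd (sc_port r h u p)"
  shows "sc_port r h w q = (u, p) \<and> q < sc_deg r w \<and> w < 4*r+2 \<and> w \<noteq> u"
proof (cases "u < 2*r+1")
  case True
  then show ?thesis using sc_port_valid_clique[OF h True] p unfolding w_def q_def by (simp add: sc_deg_def)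
next
  case False
  define a where "a = u - (2*r+1)"
  have a: "a < 2*r+1" "u = 2*r+1+a" using False u by (auto simp: a_def)
  have "p < 2" using p False u by (simp add: sc_deg_def)
  then show ?thesis using sc_port_valid_subdivision[OF h a(1)] unfolding w_def q_def a(2) by blast
qed

lemma sc_port_inj_on:
  assumes h: "h \<in> sc_choices r" and u: "u < 4*r+2"
  shows "inj_on (\<lambda>p. fst (sc_port r h u p)) {..<sc_deg r u}"
proof (cases "u < 2*r+1")
  case True
  show ?thesis
  proof (rule inj_onI)
    fix p1 p2 assume "p1 \<in> {..<sc_deg r u}" "p2 \<in> {..<sc_deg r u}"
      and eq: "fst (sc_port r h u p1) = fst (sc_port r h u p2)"
    then have p: "p1 < 2*r" "p2 < 2*r" using True by (auto simp: sc_deg_def)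
    define b1 where "b1 = (u + Suc p1) mod (2*r+1)"
    define b2 where "b2 = (u + Suc p2) mod (2*r+1)"
    have b: "b1 < 2*r+1" "b2 < 2*r+1" "b1 \<noteq> u" "b2 \<noteq> u" "b1 = b2 \<Longrightarrow> p1 = p2"
      using mod_add_neq_self[OF True, of "Suc p1"] mod_add_neq_self[OF True, of "Suc p2"]
        mod_add_left_inj[of u "Suc p1" "2*r+1" "Suc p2"] p
      by (auto simp: b1_def b2_def)
    show "p1 = p2"
      using eq b sc_port_clique[OF True p(1) b1_def, of h] sc_port_clique[OF True p(2) b2_def, of h]
      by (auto split: if_splits)
  qed
next
  case False
  define a where "a = u - (2*r+1)"
  have a: "a < 2*r+1" "u = 2*r+1+a" using False u by (auto simp: a_def)
  have "(a + h a) mod (2*r+1) \<noteq> a"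
    using mod_add_neq_self[OF a(1), of "h a"] sc_choicesD[OF h a(1)] by auto
  then show ?thesis using sc_port_subdivision[OF a(1), of h] a
    by (auto simp: sc_deg_def inj_on_def less_2_cases_iff)
qed

lemma sc_adj_port: "u < 4*r+2 \<Longrightarrow> p < sc_deg r u \<Longrightarrow> adj (sc_graph r h) u (fst (sc_port r h u p))"
  unfolding adj_def by auto

lemma sc_clique_reaches_0:
  assumes u: "u < 2*r+1"
  shows "(adj (sc_graph r h))\<^sup>*\<^sup>* u 0"
proof (cases "u = 0")
  case False
  define p where "p = 2*r - u"
  have p: "p < 2*r" and jump: "0 = (u + Suc p) mod (2*r+1)" using False u by (auto simp: p_def)
  have "adj (sc_graph r h) u (fst (sc_port r h u p))"
    by (rule sc_adj_port) (use u p in \<open>auto simp: sc_deg_def\<close>)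
  moreover have "adj (sc_graph r h) (2*r+1+u) 0" if "h u = Suc p"
    using sc_adj_port[of "2*r+1+u" r 1 h] sc_port_subdivision[OF u, of h 1] u that jump
    by (simp add: sc_deg_def)
  moreover have "adj (sc_graph r h) (2*r+1) 0"
    using sc_adj_port[of "2*r+1" r 0 h] sc_port_subdivision[of 0 r h 0] by (simp add: sc_deg_def)
  ultimately show ?thesis using sc_port_clique[OF u p jump, of h]
    by (auto split: if_splits intro: converse_rtranclp_into_rtranclp)
qed simp

lemma sc_reaches_0:
  assumes "u < 4*r+2"
  shows "(adj (sc_graph r h))\<^sup>*\<^sup>* u 0"
proof (cases "u < 2*r+1")
  case False
  define a where "a = u - (2*r+1)"
  have a: "a < 2*r+1" "u = 2*r+1+a" using False assms by (auto simp: a_def)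
  then have "adj (sc_graph r h) u a"
    using sc_adj_port[of u r 0 h] sc_port_subdivision[OF a(1), of h 0] by (simp add: sc_deg_def)
  then show ?thesis using sc_clique_reaches_0[OF a(1)] by (rule converse_rtranclp_into_rtranclp)
qed (use sc_clique_reaches_0 in blast)

lemma sc_graph_valid:
  assumes h: "h \<in> sc_choices r"
  shows "valid_pgraph (sc_graph r h)"
proof -
  have "symp (adj (sc_graph r h))"
  proof (rule sympI)
    fix u w assume "adj (sc_graph r h) u w"
    then obtain p where "u < 4*r+2" "p < sc_deg r u" "w = fst (sc_port r h u p)"
      unfolding adj_def by auto
    then show "adj (sc_graph r h) w u"
      using sc_port_valid[OF h] sc_adj_port[of w r "snd (sc_port r h u p)" h] by fastforce
  qed
  then have "(adj (sc_graph r h))\<^sup>*\<^sup>* u w" if "u < 4*r+2" "w < 4*r+2" for u w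
    using sc_reaches_0[OF that(1)] sc_reaches_0[OF that(2)] symp_rtranclp
    by (metis rtranclp_trans sympD)
  then show ?thesis unfolding valid_pgraph_def
    using sc_port_outside[of _ r _ h] sc_port_valid[OF h] sc_port_inj_on[OF h]
    by (auto simp: sc_deg_def)
qed

section \<open>Reconstructing the subdivision from the visit times\<close>

abbreviation sc_run :: "nat \<Rightarrow> (nat \<Rightarrow> nat) \<Rightarrow> algo \<Rightarrow> bool list \<Rightarrow> nat \<Rightarrow> nat \<times> (nat \<times> nat) list" where
  "sc_run r h A s k \<equiv> run (sc_graph r h) A s 0 k"

lemma sc_run_Suc:
  assumes "sc_run r h A s k = (u, H)" "A s (sc_deg r 0) H = Some p"
  shows "sc_run r h A s (Suc k) =
    (fst (sc_port r h u p), H @ [(snd (sc_port r h u p), sc_deg r (fst (sc_port r h u p)))])"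
  using run_Suc_Some[of "sc_graph r h" A s 0 k u H p] assms by (cases "sc_port r h u p") simp

definition visit_times :: "nat \<Rightarrow> (nat \<Rightarrow> nat) \<Rightarrow> algo \<Rightarrow> bool list \<Rightarrow> nat set" where
  "visit_times r h A s = (\<lambda>a. first_visit (sc_graph r h) A s 0 (2*r+1+a)) ` {..<2*r+1}"

lemma visit_times_subset:
  assumes "explores_in (sc_graph r h) A s 0 t"
  shows "visit_times r h A s \<subseteq> {..<t}"
  using first_visit_less[OF assms] unfolding visit_times_def by auto

lemma card_visit_times:
  assumes "explores_in (sc_graph r h) A s 0 t"
  shows "card (visit_times r h A s) = 2*r+1"
proof -
  have "inj_on (\<lambda>a. first_visit (sc_graph r h) A s 0 (2*r+1+a)) {..<2*r+1}"
    by (rule inj_on_inverseI[where g = "\<lambda>k. fst (sc_run r h A s (Suc k)) - (2*r+1)"])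
      (use run_first_visit[OF assms] in simp)
  then show ?thesis unfolding visit_times_def by (simp add: card_image)
qed

lemma visit_times_subdivision:
  assumes "explores_in (sc_graph r h) A s 0 t" "k \<in> visit_times r h A s"
  shows "2*r+1 \<le> fst (sc_run r h A s (Suc k))"
  using assms(2) run_first_visit[OF assms(1)] unfolding visit_times_def by auto

lemma first_subdivision_visit_in_visit_times:
  assumes "a < 2*r+1" "fst (sc_run r h A s (Suc k)) = 2*r+1+a" "\<forall>j\<le>k. fst (sc_run r h A s j) \<noteq> 2*r+1+a"
  shows "k \<in> visit_times r h A s"
  using first_visit_eqI[OF assms(2,3)] assms(1) unfolding visit_times_def by force

lemma visit_times_first_entry:
  assumes "explores_in (sc_graph r h) A s 0 t" "explores_in (sc_graph r h') A s 0 t"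
    and "visit_times r h A s = visit_times r h' A s"
    and "a < 2*r+1" "fst (sc_run r h A s (Suc k)) = 2*r+1+a" "\<forall>j\<le>k. fst (sc_run r h A s j) \<noteq> 2*r+1+a"
  shows "2*r+1 \<le> fst (sc_run r h' A s (Suc k))"
  using visit_times_subdivision[OF assms(2)] first_subdivision_visit_in_visit_times[OF assms(4-6)] assms(3)
  by blast

text \<open>If a port leads to different nodes in the two graphs, then in one of them it leads to a
  subdivision node not visited before; that step is a visit time, so equal visit times force the
  other run to enter a subdivision node too, and then the ports agree.\<close>

lemma sc_next_port_agrees:
  assumes ex1: "explores_in (sc_graph r h1) A s 0 t" and ex2: "explores_in (sc_graph r h2) A s 0 t"
    and times: "visit_times r h1 A s = visit_times r h2 A s"
    and same: "\<forall>j\<le>k. sc_run r h1 A s j = sc_run r h2 A s j"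
    and known: "\<forall>a<2*r+1. (\<exists>j\<le>k. fst (sc_run r h1 A s j) = 2*r+1+a) \<longrightarrow> h1 a = h2 a"
    and uH1: "sc_run r h1 A s k = (u, H)" and p: "A s (sc_deg r 0) H = Some p"
  shows "sc_port r h1 u p = sc_port r h2 u p"
proof (rule sc_port_eqI)
  have uH2: "sc_run r h2 A s k = (u, H)" using same uH1 by simp
  note step1 = sc_run_Suc[OF uH1 p] and step2 = sc_run_Suc[OF uH2 p]
  fix a assume a: "a < 2*r+1" "2*r+1+a \<in> {u, fst (sc_port r h1 u p), fst (sc_port r h2 u p)}"
  show "h1 a = h2 a \<or> (2*r+1 \<le> fst (sc_port r h1 u p) \<and> 2*r+1 \<le> fst (sc_port r h2 u p))"
  proof (cases "\<exists>j\<le>k. fst (sc_run r h1 A s j) = 2*r+1+a")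
    case True
    then show ?thesis using known a(1) by blast
  next
    case False
    then have "\<forall>j\<le>k. fst (sc_run r h2 A s j) \<noteq> 2*r+1+a" using same by auto
    moreover have "2*r+1+a \<noteq> u" using False uH1 by force
    ultimately show ?thesis
      using a False visit_times_first_entry[OF ex1 ex2 times a(1), where k=k]
        visit_times_first_entry[OF ex2 ex1 times[symmetric] a(1), where k=k]
        step1 step2 by auto
  qed
qed

lemma sc_runs_agree:
  assumes ex1: "explores_in (sc_graph r h1) A s 0 t" and ex2: "explores_in (sc_graph r h2) A s 0 t"
    and times: "visit_times r h1 A s = visit_times r h2 A s" and "k \<le> t"
  shows "(\<forall>j\<le>k. sc_run r h1 A s j = sc_run r h2 A s j) \<and>
    (\<forall>a<2*r+1. (\<exists>j\<le>k. fst (sc_run r h1 A s j) = 2*r+1+a) \<longrightarrow> h1 a = h2 a)"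
  using \<open>k \<le> t\<close>
proof (induction k)
  case (Suc k)
  then have k: "k < t" and same: "\<forall>j\<le>k. sc_run r h1 A s j = sc_run r h2 A s j"
    and known: "\<forall>a<2*r+1. (\<exists>j\<le>k. fst (sc_run r h1 A s j) = 2*r+1+a) \<longrightarrow> h1 a = h2 a"
    by auto
  obtain u H where uH1: "sc_run r h1 A s k = (u, H)" by fastforce
  then have uH2: "sc_run r h2 A s k = (u, H)" using same by simp
  obtain p where p: "A s (sc_deg r 0) H = Some p" using explores_in_step[OF ex1 k] uH1 by auto
  note step1 = sc_run_Suc[OF uH1 p] and step2 = sc_run_Suc[OF uH2 p]
  have port: "sc_port r h1 u p = sc_port r h2 u p"
    by (rule sc_next_port_agrees[OF ex1 ex2 times same known uH1 p])
  show ?case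
  proof (intro conjI allI impI)
    fix j assume "j \<le> Suc k"
    then show "sc_run r h1 A s j = sc_run r h2 A s j" using same step1 step2 port le_Suc_eq by auto
  next
    fix a assume a: "a < 2*r+1" "\<exists>j\<le>Suc k. fst (sc_run r h1 A s j) = 2*r+1+a"
    show "h1 a = h2 a"
    proof (cases "fst (sc_run r h1 A s (Suc k)) = 2*r+1+a")
      case True
      then show ?thesis using sc_port_subdivision_target[of r h1 u p a]
        sc_port_subdivision_target[of r h2 u p a] step1 port by simp
    next
      case False
      then show ?thesis using known a le_Suc_eq by auto
    qed
  qed
qed simp

lemma sc_choice_determined:
  assumes h1: "h1 \<in> sc_choices r" and h2: "h2 \<in> sc_choices r"
    and ex1: "explores_in (sc_graph r h1) A s 0 t" and ex2: "explores_in (sc_graph r h2) A s 0 t"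
    and times: "visit_times r h1 A s = visit_times r h2 A s"
  shows "h1 = h2"
proof (rule PiE_ext[OF h1[unfolded sc_choices_def] h2[unfolded sc_choices_def]])
  fix a assume "a \<in> {..<2*r+1}"
  moreover have "\<exists>j\<le>t. fst (sc_run r h1 A s j) = 2*r+1+a"
    using explores_in_visits[OF ex1, of "2*r+1+a"] \<open>a \<in> {..<2*r+1}\<close> by (auto intro: Suc_leI)
  ultimately show "h1 a = h2 a" using sc_runs_agree[OF ex1 ex2 times order.refl] by blast
qed

section \<open>Counting\<close>

lemma card_sc_choices: "card (sc_choices r) = r ^ (2*r+1)"
  unfolding sc_choices_def by (simp add: card_PiE)

lemma sc_choices_count_bound:
  fixes adv :: "(nat \<Rightarrow> nat) \<Rightarrow> bool list"
  assumes fast: "\<forall>h\<in>sc_choices r. \<exists>t<T. explores_in (sc_graph r h) A (adv h) 0 t"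
    and short: "\<forall>h\<in>sc_choices r. length (adv h) \<le> L"
  shows "r ^ (2*r+1) \<le> 2^(L+1) * T * (T choose (2*r+1))"
proof -
  define time where "time h = (SOME t. t < T \<and> explores_in (sc_graph r h) A (adv h) 0 t)" for h
  have time: "time h < T" "explores_in (sc_graph r h) A (adv h) 0 (time h)" if "h \<in> sc_choices r" for h
    using someI_ex[OF fast[rule_format, OF that]] unfolding time_def by auto
  define code where "code h = (adv h, time h, visit_times r h A (adv h))" for h
  define Advice where "Advice = {xs :: bool list. set xs \<subseteq> UNIV \<and> length xs \<le> L}"
  define Times where "Times = {E. E \<subseteq> {..<T} \<and> card E = 2*r+1}"
  have "inj_on code (sc_choices r)"
  proof (rule inj_onI)
    fix h1 h2 assume h: "h1 \<in> sc_choices r" "h2 \<in> sc_choices r" and "code h1 = code h2"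
    then have "adv h1 = adv h2 \<and> time h1 = time h2 \<and>
      visit_times r h1 A (adv h1) = visit_times r h2 A (adv h2)" unfolding code_def by (meson prod.inject)
    then show "h1 = h2" using sc_choice_determined[OF h] time(2)[OF h(1)] time(2)[OF h(2)] by metis
  qed
  moreover have "code ` sc_choices r \<subseteq> Advice \<times> {..<T} \<times> Times"
    using short time visit_times_subset card_visit_times
    by (fastforce simp: code_def Advice_def Times_def intro: order.trans)
  moreover have "finite (Advice \<times> {..<T} \<times> Times)"
    unfolding Advice_def Times_def using finite_lists_length_le[of "UNIV :: bool set" L] by simp
  ultimately have "card (sc_choices r) \<le> card Advice * T * card Times"
    by (metis card_image card_mono card_cartesian_product card_lessThan mult.assoc)
  also have "card Advice \<le> 2^(L+1)"
  proof -
    have "card Advice = (\<Sum>i\<le>L. 2^i)" unfolding Advice_def using card_lists_length_le[of "UNIV :: bool set" L] by simp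
    also have "\<dots> \<le> 2^(L+1)" by (induction L) auto
    finally show ?thesis .
  qed
  also have "card Times = T choose (2*r+1)" unfolding Times_def using n_subsets[of "{..<T}"] by simp
  finally show ?thesis by (simp add: card_sc_choices mult_right_mono)
qed

lemma power_le_exp_mult_fact: "real n ^ n \<le> exp (real n) * fact n"
proof -
  have s: "(\<lambda>i. real n ^ i /\<^sub>R fact i) sums exp (real n)" by (rule exp_converges)
  have "(\<Sum>i\<in>{n}. real n ^ i /\<^sub>R fact i) \<le> (\<Sum>i. real n ^ i /\<^sub>R fact i)"
    by (rule sum_le_suminf) (use s in \<open>auto simp: sums_iff\<close>)
  then have "real n ^ n / fact n \<le> exp (real n)" using s by (simp add: sums_iff divide_inverse mult.commute)
  then show ?thesis by (simp add: divide_le_eq mult.commute)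
qed

lemma fact_ge_power:
  fixes x :: real
  assumes "0 \<le> x" "2*x \<le> real m"
  shows "(2*x/3) ^ m \<le> fact m"
proof -
  have "(2*x) ^ m \<le> real m ^ m" using assms by (intro power_mono) auto
  also have "\<dots> \<le> exp 1 ^ m * fact m" using power_le_exp_mult_fact[of m] exp_of_nat_mult[of m "1::real"] by simp
  also have "\<dots> \<le> 3 ^ m * fact m" using exp_le by (intro mult_right_mono power_mono) auto
  finally show ?thesis by (simp add: power_divide divide_le_eq mult.commute)
qed

lemma exploration_log_estimate:
  fixes e :: real and r L :: nat
  assumes e: "1 \<le> e" "e < 2" and r: "1 \<le> r" "1000/(2-e) < ln (real r)"
    and L: "real L \<le> (2-e)/4 * (real (4*r+2) * log 2 (real (4*r+2)))"
  shows "real (L+1) * ln 2 + real (2*r+2) * ln (37 * real r powr e) < real (2*r+1) * ln (2 * real r * real r / 3)"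
proof -
  define x where "x = real r"
  define n where "n = real (4*r+2)"
  define l where "l = ln x"
  define u where "u = 2 - e"
  define P where "P = x * l"
  have x: "1 \<le> x" using r(1) by (simp add: x_def)
  have n: "n = 4*x+2" "n \<le> 6*x" using x by (auto simp: n_def x_def)
  have u: "0 < u" "u \<le> 1" using e by (auto simp: u_def)
  have l: "0 \<le> l" "l \<le> x" using x ln_le_minus_one[of x] by (auto simp: l_def)
  have ul: "1000 < u * l" using r(2) u(1) by (simp add: divide_less_eq mult.commute u_def l_def x_def)
  have "real L * ln 2 \<le> u/4 * (n * ln n)"
    using L ln_gt_zero[of 2] by (simp add: n_def u_def log_def pos_le_divide_eq mult.commute)
  also have "\<dots> \<le> u/4 * (6*x * (ln 6 + l))"
    using n x u l ln_mult[of 6 x] ln_le_cancel_iff[of n "6*x"] by (intro mult_left_mono mult_mono) (auto simp: l_def)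
  also have "\<dots> \<le> 15/2 * x + 3/2 * (u * P)"
  proof -
    have "u * ln 6 \<le> 1 * 5" using u ln_le_minus_one[of 6] by (intro mult_mono) auto
    then show ?thesis using x by (simp add: P_def algebra_simps)
  qed
  finally have advice_term: "real (L+1) * ln 2 \<le> 15/2 * x + 3/2 * (u * P) + 1"
    using ln_le_minus_one[of 2] by (simp add: algebra_simps)
  have "real (2*r+2) * ln (37 * x powr e) = (2*x+2) * ln 37 + (2*x+2) * (e * l)"
    using x by (simp add: ln_mult l_def x_def algebra_simps)
  also have "\<dots> \<le> (2*x+2) * 36 + (4*P + 4*l - 2*(u*P) - 2*(u*l))"
    using ln_le_minus_one[of 37] x by (intro add_mono mult_left_mono) (auto simp: P_def u_def algebra_simps)
  finally have time_term: "real (2*r+2) * ln (37 * x powr e) \<le> 72*x + 72 + 4*P + 4*l - 2*(u*P) - 2*(u*l)"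
    by simp
  have "real (2*r+1) * ln (2*x*x/3) = (2*x+1) * (2*l - (ln 3 - ln 2))"
    using x by (simp add: ln_mult ln_div l_def x_def algebra_simps)
  also have "\<dots> \<ge> (2*x+1) * (2*l - 1)"
    using ln_le_minus_one[of "3/2"] x by (intro mult_left_mono) (auto simp: ln_div)
  finally have count_term: "real (2*r+1) * ln (2*x*x/3) \<ge> 4*P + 2*l - 2*x - 1"
    by (simp add: P_def algebra_simps)
  have "1000 * x < u * P" using mult_strict_right_mono[OF ul, of x] x by (simp add: P_def mult_ac)
  then show ?thesis
    using advice_term time_term count_term l x u ul unfolding x_def by linarith
qed

lemma exploration_count_estimate:
  fixes e :: real and r L T :: nat
  assumes e: "1 \<le> e" "e < 2" and r: "1 \<le> r" "1000/(2-e) < ln (real r)"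
    and L: "real L \<le> (2-e)/4 * (real (4*r+2) * log 2 (real (4*r+2)))"
    and T: "real T \<le> real (4*r+2) powr e + 1"
  shows "2^(L+1) * real T ^ (2*r+2) < real r ^ (2*r+1) * fact (2*r+1)"
proof -
  define x where "x = real r"
  define B where "B = 37 * x powr e"
  have x: "1 \<le> x" using r(1) by (simp add: x_def)
  have B: "0 < B" using x by (simp add: B_def)
  have "real T \<le> B"
  proof -
    have "real (4*r+2) powr e \<le> (6*x) powr e" using x e by (intro powr_mono2) (auto simp: x_def)
    also have "\<dots> = 6 powr e * x powr e" using x by (simp add: powr_mult)
    also have "\<dots> \<le> 36 * x powr e" using powr_mono[of e 2 6] e by (intro mult_right_mono) auto
    finally show ?thesis using T x ge_one_powr_ge_zero[of x e] e by (simp add: B_def)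
  qed
  then have "2^(L+1) * real T ^ (2*r+2) \<le> 2^(L+1) * B^(2*r+2)" by (intro mult_left_mono power_mono) auto
  also have "\<dots> < (2*x*x/3)^(2*r+1)"
  proof -
    have "ln (2^(L+1) * B^(2*r+2)) = real (L+1) * ln 2 + real (2*r+2) * ln B"
      using B by (simp only: ln_mult_pos zero_less_power ln_realpow zero_less_numeral)
    also have "\<dots> < real (2*r+1) * ln (2*x*x/3)"
      using exploration_log_estimate[OF e r L] by (simp add: B_def x_def)
    also have "\<dots> = ln ((2*x*x/3)^(2*r+1))" by (rule ln_realpow[symmetric])
    finally show ?thesis using B x by simp
  qed
  also have "\<dots> = x^(2*r+1) * (2*x/3)^(2*r+1)"
    by (simp add: power_mult_distrib[symmetric] algebra_simps)
  also have "\<dots> \<le> x^(2*r+1) * fact (2*r+1)"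
    using fact_ge_power[of x "2*r+1"] x by (intro mult_left_mono) (auto simp: x_def)
  finally show ?thesis by (simp add: x_def)
qed

lemma sc_exploration_slow:
  fixes f :: advice_fn and A :: algo
  assumes e: "1 \<le> e" "e < 2" and r: "1 \<le> r" "1000/(2-e) < ln (real r)"
    and adv: "real (max_advice f (4*r+2)) \<le> (2-e)/4 * (real (4*r+2) * log 2 (real (4*r+2)))"
  shows "\<exists>h\<in>sc_choices r. \<forall>t. explores_in (sc_graph r h) A (f (sc_graph r h) 0) 0 t \<longrightarrow>
           real (4*r+2) powr e \<le> real t"
proof (rule ccontr)
  assume fast: "\<not> ?thesis"
  define L where "L = max_advice f (4*r+2)"
  define T where "T = nat \<lceil>real (4*r+2) powr e\<rceil>"
  have "\<forall>h\<in>sc_choices r. \<exists>t<T. explores_in (sc_graph r h) A (f (sc_graph r h) 0) 0 t"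
    using fast by (auto simp: T_def zless_nat_eq_int_zless less_ceiling_iff not_le)
  moreover have "\<forall>h\<in>sc_choices r. length (f (sc_graph r h) 0) \<le> L"
    by (simp add: L_def length_advice_le_max_advice sc_graph_valid)
  ultimately have count: "r ^ (2*r+1) \<le> 2^(L+1) * T * (T choose (2*r+1))"
    by (rule sc_choices_count_bound)
  have "r ^ (2*r+1) * fact (2*r+1) \<le> 2^(L+1) * T * ((T choose (2*r+1)) * fact (2*r+1))"
    using mult_le_mono1[OF count, of "fact (2*r+1)"] by (simp only: mult.assoc)
  also have "\<dots> \<le> 2^(L+1) * T * T ^ (2*r+1)"
    by (intro mult_left_mono binomial_fact_pow) simp
  finally have "r ^ (2*r+1) * fact (2*r+1) \<le> 2^(L+1) * T ^ (2*r+2)"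
    by (simp add: mult.assoc)
  then have "real (r ^ (2*r+1) * fact (2*r+1)) \<le> real (2^(L+1) * T ^ (2*r+2))"
    by (rule of_nat_mono)
  then have "real r ^ (2*r+1) * fact (2*r+1) \<le> 2^(L+1) * real T ^ (2*r+2)"
    by (simp only: of_nat_mult of_nat_power of_nat_fact of_nat_numeral)
  moreover have "real T \<le> real (4*r+2) powr e + 1" by (simp add: T_def of_nat_nat)
  ultimately show False
    using exploration_count_estimate[OF e r adv[folded L_def], of T] by linarith
qed

lemma slow_exploration_instance:
  fixes f :: advice_fn and A :: algo
  assumes e: "\<epsilon> \<le> e" "1 \<le> e" "e < 2" and r: "exp (1000/(2-e)) < real r"
    and adv: "real (max_advice f (4*r+2)) \<le> (2-e)/4 * (real (4*r+2) * log 2 (real (4*r+2)))"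
  shows "\<exists>G v. valid_pgraph G \<and> nodes G = 4*r+2 \<and> v < 4*r+2 \<and>
           (\<forall>t. explores_in G A (f G v) v t \<longrightarrow> real t \<ge> real (4*r+2) powr \<epsilon>)"
proof -
  have "0 < real r" using r exp_gt_zero[of "1000/(2-e)"] by linarith
  then have "1 \<le> r" "1000/(2-e) < ln (real r)"
    using r ln_less_cancel_iff[of "exp (1000/(2-e))" "real r"] by auto
  then obtain h where h: "h \<in> sc_choices r"
    and slow: "\<forall>t. explores_in (sc_graph r h) A (f (sc_graph r h) 0) 0 t \<longrightarrow> real (4*r+2) powr e \<le> real t"
    using sc_exploration_slow[OF e(2,3) _ _ adv] by blast
  have "real (4*r+2) powr \<epsilon> \<le> real (4*r+2) powr e" using e by (intro powr_mono) auto
  then have "\<forall>t. explores_in (sc_graph r h) A (f (sc_graph r h) 0) 0 t \<longrightarrow> real t \<ge> real (4*r+2) powr \<epsilon>"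
    using slow order_trans by blast
  then show ?thesis using sc_graph_valid[OF h] by (auto intro!: exI[of _ "sc_graph r h"])
qed

lemma max_advice_eventually_le:
  assumes "(\<lambda>n. real (max_advice f n)) \<in> o(\<lambda>n. real n * log 2 (real n))" "0 < \<delta>"
  obtains N where "\<And>n. N \<le> n \<Longrightarrow> real (max_advice f n) \<le> \<delta> * (real n * log 2 (real n))"
proof -
  obtain N where N: "\<forall>n\<ge>N. norm (real (max_advice f n)) \<le> \<delta> * norm (real n * log 2 (real n))"
    using landau_o.smallD[OF assms] unfolding eventually_at_top_linorder by blast
  show ?thesis
  proof (rule that)
    fix n assume "N \<le> n"
    moreover have "0 \<le> real n * log 2 (real n)" by (cases "n = 0") auto
    ultimately show "real (max_advice f n) \<le> \<delta> * (real n * log 2 (real n))"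
      using N[rule_format, of n] by simp
  qed
qed

theorem mainTheorem10:
  fixes \<epsilon> :: real and f :: advice_fn and A :: algo
  assumes "\<epsilon> < 2"
    and "(\<lambda>n. real (max_advice f n)) \<in> o(\<lambda>n. real n * log 2 (real n))"
  shows "\<exists>c > 0. infinite {n. \<exists>G v. valid_pgraph G \<and> nodes G = n \<and> v < n \<and>
            (\<forall>t. explores_in G A (f G v) v t \<longrightarrow> real t \<ge> c * real n powr \<epsilon>)}"
proof (intro exI conjI)
  define e where "e = max \<epsilon> 1"
  have e: "\<epsilon> \<le> e" "1 \<le> e" "e < 2" using assms(1) by (auto simp: e_def)
  then obtain N where N: "\<And>n. N \<le> n \<Longrightarrow> real (max_advice f n) \<le> (2-e)/4 * (real n * log 2 (real n))"
    using max_advice_eventually_le[OF assms(2), of "(2-e)/4"] by auto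
  let ?S = "{n. \<exists>G v. valid_pgraph G \<and> nodes G = n \<and> v < n \<and>
            (\<forall>t. explores_in G A (f G v) v t \<longrightarrow> real t \<ge> 1 * real n powr \<epsilon>)}"
  show "infinite ?S"
    unfolding infinite_nat_iff_unbounded_le
  proof
    fix M
    define r where "r = max M N + nat \<lceil>exp (1000/(2-e))\<rceil> + 1"
    have r: "exp (1000/(2-e)) < real r"
      using real_nat_ceiling_ge[of "exp (1000/(2-e))"] of_nat_0_le_iff[of "max M N"]
      unfolding r_def of_nat_add of_nat_1 by linarith
    have "N \<le> 4*r+2" by (simp add: r_def)
    then have "4*r+2 \<in> ?S" using slow_exploration_instance[OF e r N, of A] by simp
    moreover have "M \<le> 4*r+2" by (simp add: r_def)
    ultimately show "\<exists>n\<ge>M. n \<in> ?S" by blast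
  qed
qed simp

end
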